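(* Let $d,n\geqslant1$, $N=n+2d+1$, and let $\mathcal{O}$ be the $(d+2)$-angulated cluster category of $A^d_n$ with the Oppermann–Thomas labelling $A\mapsto O_A$, $A\in\mathbf{J}^d_N$. Suppose there are non-zero morphisms $O_A\to O_B$ and $O_B\to O_C$. Then these compose to a non-zero morphism $O_A\to O_C$ if and only if there is a cyclically shifted ordering of $[N]=\{1,\dots,N\}$ with respect to which $$a_0-1\leqslant b_0-1<c_0<a_1-1\leqslant b_1-1<c_1<\dots<a_d-1\leqslant b_d-1<c_d<a_0+n+2d,$$ all entries being read modulo $N$.
   Context: $A^d_n$ is the higher Auslander algebra of type $A$ with basic $d$-cluster-tilting module $M^{(d,n)}$; $\mathcal{U}=\operatorname{add}\{M^{(d,n)}[id]\}\subseteq\mathcal{D}^b(\operatorname{mod}A^d_n)$ and $\mathcal{O}=\mathcal{U}/(\nu_d[-d])$ is the orbit category, $\nu_d=\nu\circ[-d]$ with $\nu$ the derived Nakayama functor. $\mathbf{J}^d_N$ is the set of $(a_0,\dots,a_d)\in\{1,\dots,N\}^{d+1}$ with $a_{i+1}\geqslant a_i+2$ and $a_d\leqslant a_0+N-2$. A cyclically shifted ordering of $[N]$ is an order $l<l+1<\dots<N<1<\dots<l-1$ for some $l\in[N]$. In $\mathcal{O}$, arithmetic on labels is modulo $N$ (so $a_0+n+2d\equiv a_0-1$) and tuples are implicitly reordered increasingly; $\mathbf{1}=(1,\dots,1)$. Oppermann–Thomas labelling: indecomposables of $\mathcal{U}$ are labelled $U_A$ by tuples $A\in\mathbb{Z}^{d+1}$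 with $a_{i+1}\geqslant a_i+2$ and $a_d+2\leqslant a_0+N$, with $\operatorname{Hom}_{\mathcal{U}}(U_B,U_A)\neq0$ (then one-dimensional) iff $b_0-1<a_0<b_1-1<\dots<b_d-1<a_d<b_0+n+2d$, and $U_A\to U_B\to U_C$ composing non-zero iff $a_0-1<c_0<a_1-1<\dots<a_d-1<c_d<a_0+n+2d$; the projection $\mathcal{U}\to\mathcal{O}$ sends $U_A$ to $O_{A\bmod N}$; $O_A[d]=O_{A-\mathbf{1}}$, and $\operatorname{Hom}_{\mathcal{O}}(O_B,O_A)\neq0$ iff $A-\mathbf{1}$... precisely iff $(B-\mathbf{1})\wr A$ or $A\wr(B-\mathbf{1})$ (after reduction mod $N$ and reordering), where $X\wr Y$ means $x_0<y_0<x_1<\dots<x_d<y_d$. *)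

theory Defs
  imports Main
begin

text \<open>Combinatorial model of the (d+2)-angulated cluster category O of the higher
Auslander algebra A^d_n, via the Oppermann--Thomas labelling.  Tuples
(x_0,...,x_d) are represented as functions nat => int, indices 0..d.\<close>

definition inJ :: "nat \<Rightarrow> int \<Rightarrow> (nat \<Rightarrow> int) \<Rightarrow> bool" where
  "inJ d N a \<longleftrightarrow> (\<forall>i\<le>d. 1 \<le> a i \<and> a i \<le> N)
     \<and> (\<forall>i<d. a (Suc i) \<ge> a i + 2) \<and> a d \<le> a 0 + N - 2"

text \<open>Labels of indecomposables U_X of U = add{M[id]} in D^b(mod A^d_n).\<close>
definition labU :: "nat \<Rightarrow> int \<Rightarrow> (nat \<Rightarrow> int) \<Rightarrow> bool" where
  "labU d N x \<longleftrightarrow> (\<forall>i<d. x (Suc i) \<ge> x i + 2) \<and> x d + 2 \<le> x 0 + N"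

definition redN :: "int \<Rightarrow> int \<Rightarrow> int" where
  "redN N x = (x - 1) mod N + 1"

text \<open>U_X is a lift of O_A: the projection U -> O sends U_X to O_(X mod N)
  (entries reduced mod N and reordered).\<close>
definition liftO :: "nat \<Rightarrow> int \<Rightarrow> (nat \<Rightarrow> int) \<Rightarrow> (nat \<Rightarrow> int) \<Rightarrow> bool" where
  "liftO d N x a \<longleftrightarrow> labU d N x \<and> redN N ` x ` {0..d} = a ` {0..d}"

text \<open>Hom_U(U_X, U_Y) \<noteq> 0 (morphism X -> Y), with n + 2d = N - 1:
  x_0-1 < y_0 < x_1-1 < ... < x_d-1 < y_d < x_0+n+2d.\<close>
definition homU :: "nat \<Rightarrow> int \<Rightarrow> (nat \<Rightarrow> int) \<Rightarrow> (nat \<Rightarrow> int) \<Rightarrow> bool" where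
  "homU d N x y \<longleftrightarrow> (\<forall>i\<le>d. x i - 1 < y i) \<and> (\<forall>i<d. y i < x (Suc i) - 1)
     \<and> y d < x 0 + (N - 1)"

text \<open>The non-zero morphisms U_X -> U_Y -> U_Z compose to a non-zero morphism:
  x_0-1 < z_0 < x_1-1 < ... < x_d-1 < z_d < x_0+n+2d.\<close>
definition compU :: "nat \<Rightarrow> int \<Rightarrow> (nat \<Rightarrow> int) \<Rightarrow> (nat \<Rightarrow> int) \<Rightarrow> (nat \<Rightarrow> int) \<Rightarrow> bool" where
  "compU d N x y z \<longleftrightarrow> homU d N x y \<and> homU d N y z \<and>
     (\<forall>i\<le>d. x i - 1 < z i) \<and> (\<forall>i<d. z i < x (Suc i) - 1) \<and> z d < x 0 + (N - 1)"

text \<open>Hom_O(O_A, O_B) = direct sum over lifts of Hom_U, so it is non-zero iff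
  some lifts have a non-zero U-morphism.\<close>
definition homO :: "nat \<Rightarrow> int \<Rightarrow> (nat \<Rightarrow> int) \<Rightarrow> (nat \<Rightarrow> int) \<Rightarrow> bool" where
  "homO d N a b \<longleftrightarrow> (\<exists>x y. liftO d N x a \<and> liftO d N y b \<and> homU d N x y)"

text \<open>The non-zero morphisms O_A -> O_B -> O_C compose to a non-zero morphism.\<close>
definition compO :: "nat \<Rightarrow> int \<Rightarrow> (nat \<Rightarrow> int) \<Rightarrow> (nat \<Rightarrow> int) \<Rightarrow> (nat \<Rightarrow> int) \<Rightarrow> bool" where
  "compO d N a b c \<longleftrightarrow> (\<exists>x y z. liftO d N x a \<and> liftO d N y b \<and> liftO d N z c
      \<and> compU d N x y z)"

text \<open>Position of (the residue mod N of) x in the cyclically shifted ordering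
  l < l+1 < ... < N < 1 < ... < l-1 of [N].\<close>
definition cpos :: "int \<Rightarrow> int \<Rightarrow> int \<Rightarrow> int" where
  "cpos N l x = (x - l) mod N"

end

theory Submission
  imports Defs
begin

(*
  Composability in O is tested on lifts to U, where a composable triple U_X -> U_Y -> U_Z is exactly
  an interlacing x_0-1 <= y_0-1 < z_0 < x_1-1 <= ... <= y_d-1 < z_d < x_0-1+N of integers.  Such a
  chain lies in the window [x_0-1, x_0-1+N), so reducing mod N and measuring positions in the
  cyclic order starting at x_0-1 turns it into the cyclic chain of the theorem; conversely, lifting
  the residues into the window starting at l turns a cyclic chain into a composable triple of lifts.
*)

definition interlaced :: "nat \<Rightarrow> int \<Rightarrow> (nat \<Rightarrow> int) \<Rightarrow> (nat \<Rightarrow> int) \<Rightarrow> (nat \<Rightarrow> int) \<Rightarrow> bool" where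
  "interlaced d N x y z \<longleftrightarrow>
     (\<forall>i\<le>d. x i - 1 \<le> y i - 1 \<and> y i - 1 < z i) \<and> (\<forall>i<d. z i < x (Suc i) - 1)
     \<and> z d < x 0 - 1 + N"

lemma compU_iff_interlaced: "compU d N x y z \<longleftrightarrow> interlaced d N x y z"
proof
  assume il: "interlaced d N x y z"
  have xy: "x i \<le> y i" and yz: "y i \<le> z i" if "i \<le> d" for i
    using il that unfolding interlaced_def by auto
  have zx: "z i < x (Suc i) - 1" if "i < d" for i
    using il that unfolding interlaced_def by auto
  have wrap: "z d < x 0 - 1 + N"
    using il unfolding interlaced_def by auto
  show "compU d N x y z"
    unfolding compU_def homU_def
  proof (intro conjI allI impI)
    fix i assume "i \<le> d"
    then show "x i - 1 < y i" "y i - 1 < z i" "x i - 1 < z i"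
      using xy[of i] yz[of i] by auto
  next
    fix i assume "i < d"
    then show "y i < x (Suc i) - 1" "z i < y (Suc i) - 1" "z i < x (Suc i) - 1"
      using xy[of "Suc i"] yz[of i] zx[of i] by auto
  next
    show "y d < x 0 + (N - 1)" "z d < y 0 + (N - 1)" "z d < x 0 + (N - 1)"
      using xy[of 0] yz[of d] wrap by auto
  qed
next
  assume "compU d N x y z"
  then have xy: "x i - 1 < y i" and yz: "y i - 1 < z i" if "i \<le> d" for i
    using that unfolding compU_def homU_def by auto
  have zx: "z i < x (Suc i) - 1" if "i < d" for i
    using \<open>compU d N x y z\<close> that unfolding compU_def by auto
  have wrap: "z d < x 0 + (N - 1)"
    using \<open>compU d N x y z\<close> unfolding compU_def by auto
  show "interlaced d N x y z"
    unfolding interlaced_def using xy yz zx wrap by force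
qed

lemma interlaced_translate:
  "interlaced d N (\<lambda>i. x i + t) (\<lambda>i. y i + t) (\<lambda>i. z i + t) \<longleftrightarrow> interlaced d N x y z"
  by (simp add: interlaced_def algebra_simps)

lemma interlaced_cong:
  assumes "\<forall>i\<le>d. x i = x' i \<and> y i = y' i \<and> z i = z' i"
  shows "interlaced d N x y z \<longleftrightarrow> interlaced d N x' y' z'"
  using assms by (simp add: interlaced_def)

lemma interlaced_window:
  assumes il: "interlaced d N x y z" and "i \<le> d"
  shows "x 0 \<le> x i" and "z i < x 0 - 1 + N"
proof -
  have "x j \<le> x (Suc j) \<and> z j \<le> z (Suc j)" if "j < d" for j
  proof -
    have "x j - 1 \<le> y j - 1" "y j - 1 < z j" "z j < x (Suc j) - 1"
      "x (Suc j) - 1 \<le> y (Suc j) - 1" "y (Suc j) - 1 < z (Suc j)"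
      using il that unfolding interlaced_def by auto
    then show ?thesis by linarith
  qed
  then have "x 0 \<le> x i" "z i \<le> z d"
    using \<open>i \<le> d\<close> by (auto intro: lift_Suc_mono_le_ivl[where N = "{..<d}"])
  then show "x 0 \<le> x i" "z i < x 0 - 1 + N"
    using il unfolding interlaced_def by auto
qed

lemma homU_labU:
  assumes "homU d N x y"
  shows "labU d N x" and "labU d N y"
proof -
  have xy: "x i \<le> y i" if "i \<le> d" for i using assms that unfolding homU_def by auto
  have yx: "y i + 2 \<le> x (Suc i)" if "i < d" for i using assms that unfolding homU_def by auto
  have wrap: "y d + 2 \<le> x 0 + N" using assms unfolding homU_def by auto
  show "labU d N x"
    unfolding labU_def
  proof (intro conjI allI impI)
    fix i assume "i < d"
    then show "x (Suc i) \<ge> x i + 2" using xy[of i] yx[of i] by auto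
  next
    show "x d + 2 \<le> x 0 + N" using xy[of d] wrap by auto
  qed
  show "labU d N y"
    unfolding labU_def
  proof (intro conjI allI impI)
    fix i assume "i < d"
    then show "y (Suc i) \<ge> y i + 2" using xy[of "Suc i"] yx[of i] by auto
  next
    show "y d + 2 \<le> y 0 + N" using xy[of 0] wrap by auto
  qed
qed

lemma redN_mod: "redN N u mod N = u mod N"
  unfolding redN_def by (simp add: mod_add_left_eq)

lemma redN_eqI:
  assumes "w mod N = v mod N" and "v \<in> {1..N}"
  shows "redN N w = v"
proof -
  have "(w - 1) mod N = (v - 1) mod N"
    using mod_diff_cong[OF assms(1) refl] .
  also have "\<dots> = v - 1"
    using assms(2) by simp
  finally show ?thesis
    unfolding redN_def by simp
qed

lemma redN_range: "N > 0 \<Longrightarrow> redN N w \<in> {1..N}"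
  unfolding redN_def by (simp add: pos_mod_bound pos_mod_sign add1_zle_eq)

lemma cpos_cong: "v mod N = v' mod N \<Longrightarrow> l mod N = l' mod N \<Longrightarrow> cpos N l v = cpos N l' v'"
  unfolding cpos_def by (rule mod_diff_cong)

lemma cpos_redN:
  "cpos N (redN N l) v = cpos N l v"
  "cpos N l (redN N u) = cpos N l u"
  "cpos N l (redN N u - k) = cpos N l (u - k)"
  by (rule cpos_cong, (rule redN_mod mod_diff_cong[OF redN_mod] refl)+)+

lemma cpos_window: "w \<le> v \<Longrightarrow> v < w + N \<Longrightarrow> cpos N w v = v - w"
  unfolding cpos_def by simp

lemma redN_shift_cpos: "v \<in> {1..N} \<Longrightarrow> redN N (cpos N l (v - k) + k + l) = v"
proof (rule redN_eqI)
  have "((v - k - l) mod N + (k + l)) mod N = ((v - k - l) + (k + l)) mod N"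
    by (rule mod_add_left_eq)
  then show "(cpos N l (v - k) + k + l) mod N = v mod N"
    unfolding cpos_def by (simp add: add.assoc)
qed

definition cyc_interlaced ::
    "nat \<Rightarrow> int \<Rightarrow> int \<Rightarrow> (nat \<Rightarrow> int) \<Rightarrow> (nat \<Rightarrow> int) \<Rightarrow> (nat \<Rightarrow> int) \<Rightarrow> bool" where
  "cyc_interlaced d N l a b c \<longleftrightarrow>
     interlaced d N (\<lambda>i. cpos N l (a i - 1) + 1) (\<lambda>i. cpos N l (b i - 1) + 1) (\<lambda>i. cpos N l (c i))"

lemma cyc_interlaced_iff:
  "cyc_interlaced d N l a b c \<longleftrightarrow>
     (\<forall>i\<le>d. cpos N l (a i - 1) \<le> cpos N l (b i - 1) \<and> cpos N l (b i - 1) < cpos N l (c i)) \<and>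
     (\<forall>i<d. cpos N l (c i) < cpos N l (a (Suc i) - 1)) \<and>
     cpos N l (c d) < cpos N l (a 0 - 1) + N"
  by (simp add: cyc_interlaced_def interlaced_def)

lemma compU_imp_cyc_interlaced:
  assumes "compU d N x y z"
  shows "cyc_interlaced d N (redN N (x 0 - 1)) (redN N \<circ> x) (redN N \<circ> y) (redN N \<circ> z)"
proof -
  define w where "w = x 0 - 1"
  have il: "interlaced d N x y z"
    using assms compU_iff_interlaced by blast
  have pos: "cpos N (redN N w) (redN N (x i) - 1) + 1 = x i + - w
      \<and> cpos N (redN N w) (redN N (y i) - 1) + 1 = y i + - w
      \<and> cpos N (redN N w) (redN N (z i)) = z i + - w" if "i \<le> d" for i
  proof -
    have "w \<le> x i - 1" "x i - 1 \<le> y i - 1" "y i - 1 < z i" "z i < w + N"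
      using interlaced_window[OF il that] il that unfolding interlaced_def w_def by auto
    then have "cpos N w (x i - 1) = x i - 1 - w" "cpos N w (y i - 1) = y i - 1 - w"
      "cpos N w (z i) = z i - w"
      by (auto intro!: cpos_window)
    then show ?thesis
      by (simp add: cpos_redN)
  qed
  have "cyc_interlaced d N (redN N w) (redN N \<circ> x) (redN N \<circ> y) (redN N \<circ> z)
      \<longleftrightarrow> interlaced d N (\<lambda>i. x i + - w) (\<lambda>i. y i + - w) (\<lambda>i. z i + - w)"
    unfolding cyc_interlaced_def using pos by (intro interlaced_cong) simp
  also have "\<dots> \<longleftrightarrow> interlaced d N x y z"
    by (rule interlaced_translate)
  finally show ?thesis
    using il unfolding w_def by simp
qed

lemma cyc_interlaced_imp_compO:
  assumes il: "cyc_interlaced d N l a b c"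
    and range: "\<forall>i\<le>d. a i \<in> {1..N} \<and> b i \<in> {1..N} \<and> c i \<in> {1..N}"
  shows "compO d N a b c"
proof -
  define x where "x i = cpos N l (a i - 1) + 1 + l" for i
  define y where "y i = cpos N l (b i - 1) + 1 + l" for i
  define z where "z i = cpos N l (c i) + l" for i
  have "interlaced d N x y z \<longleftrightarrow> cyc_interlaced d N l a b c"
    unfolding cyc_interlaced_def x_def y_def z_def by (rule interlaced_translate)
  then have "compU d N x y z"
    using il compU_iff_interlaced by blast
  then have lab: "labU d N x" "labU d N y" "labU d N z"
    using homU_labU[of d N x y] homU_labU[of d N y z] unfolding compU_def by auto
  have "redN N (x i) = a i" "redN N (y i) = b i" "redN N (z i) = c i" if "i \<le> d" for i
    using range that redN_shift_cpos[of "a i" N l 1] redN_shift_cpos[of "b i" N l 1]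
      redN_shift_cpos[of "c i" N l 0]
    unfolding x_def y_def z_def by simp_all
  then have "redN N ` x ` {0..d} = a ` {0..d}" "redN N ` y ` {0..d} = b ` {0..d}"
    "redN N ` z ` {0..d} = c ` {0..d}"
    unfolding image_image by (auto intro: image_cong)
  with lab \<open>compU d N x y z\<close> show ?thesis
    unfolding compO_def liftO_def by blast
qed

lemma compO_image_cong:
  assumes "a ` {0..d} = a' ` {0..d}" and "b ` {0..d} = b' ` {0..d}" and "c ` {0..d} = c' ` {0..d}"
  shows "compO d N a b c \<longleftrightarrow> compO d N a' b' c'"
  unfolding compO_def liftO_def assms ..

lemma inJ_range: "inJ d N a \<Longrightarrow> a ` {0..d} \<subseteq> {1..N}"
  unfolding inJ_def by auto

theorem lemma2p7:
  fixes d n :: nat and N :: int and a b c :: "nat \<Rightarrow> int"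
  assumes "d \<ge> 1" and "n \<ge> 1" and "N = int n + 2 * int d + 1"
    and "inJ d N a" and "inJ d N b" and "inJ d N c"
    and "homO d N a b" and "homO d N b c"
  shows "compO d N a b c \<longleftrightarrow>
    (\<exists>l \<in> {1..N}. \<exists>a' b' c' :: nat \<Rightarrow> int.
       a' ` {0..d} = a ` {0..d} \<and> b' ` {0..d} = b ` {0..d} \<and> c' ` {0..d} = c ` {0..d} \<and>
       (\<forall>i\<le>d. cpos N l (a' i - 1) \<le> cpos N l (b' i - 1) \<and>
                cpos N l (b' i - 1) < cpos N l (c' i)) \<and>
       (\<forall>i<d. cpos N l (c' i) < cpos N l (a' (Suc i) - 1)) \<and>
       cpos N l (c' d) < cpos N l (a' 0 - 1) + N)"
proof -
  have "compO d N a b c \<longleftrightarrow> (\<exists>l \<in> {1..N}. \<exists>a' b' c'.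
       a' ` {0..d} = a ` {0..d} \<and> b' ` {0..d} = b ` {0..d} \<and> c' ` {0..d} = c ` {0..d} \<and>
       cyc_interlaced d N l a' b' c')" (is "_ \<longleftrightarrow> ?cyclic")
  proof
    assume "compO d N a b c"
    then obtain x y z where lifts: "liftO d N x a" "liftO d N y b" "liftO d N z c"
      and "compU d N x y z"
      unfolding compO_def by blast
    have "(redN N \<circ> x) ` {0..d} = a ` {0..d}" "(redN N \<circ> y) ` {0..d} = b ` {0..d}"
      "(redN N \<circ> z) ` {0..d} = c ` {0..d}"
      using lifts unfolding liftO_def image_comp by simp_all
    moreover have "redN N (x 0 - 1) \<in> {1..N}"
      using assms(3) by (intro redN_range) simp
    ultimately show ?cyclic
      using compU_imp_cyc_interlaced[OF \<open>compU d N x y z\<close>] by blast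
  next
    assume ?cyclic
    then obtain l a' b' c' where images: "a' ` {0..d} = a ` {0..d}" "b' ` {0..d} = b ` {0..d}"
        "c' ` {0..d} = c ` {0..d}" and "cyc_interlaced d N l a' b' c'"
      by (elim bexE exE conjE) (rule that)
    have "a' ` {0..d} \<subseteq> {1..N}" "b' ` {0..d} \<subseteq> {1..N}" "c' ` {0..d} \<subseteq> {1..N}"
      unfolding images using assms(4-6) by (simp_all add: inJ_range)
    then have "\<forall>i\<le>d. a' i \<in> {1..N} \<and> b' i \<in> {1..N} \<and> c' i \<in> {1..N}"
      by (simp add: image_subset_iff)
    with \<open>cyc_interlaced d N l a' b' c'\<close> have "compO d N a' b' c'"
      by (rule cyc_interlaced_imp_compO)
    then show "compO d N a b c"
      using compO_image_cong[OF images] by blast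
  qed
  then show ?thesis
    by (simp only: cyc_interlaced_iff)
qed

end
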